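(* Let $S$ be a scoring function, $k,n\in\mathbb{N}$, $m=kn$, and let $(\vec r,\vec s)\in\mathcal{P}_{m,n}$. Then $$\frac{E[L_m(S,\vec r,\vec s)]}{m}\le\lambda_n(S)+\frac{2\|S\|_\infty}{n}.$$
   Context: Let $\mathcal{A}$ be a finite alphabet and $\mathcal{A}^*=\mathcal{A}\cup\{G\}$, where $G$ is a gap symbol. A scoring function is a symmetric map $S:\mathcal{A}^*\times\mathcal{A}^*\to\mathbb{R}$; $\|S\|_\infty=\max_{c,d\in\mathcal{A}^*}|S(c,d)|$. For strings $x=x_1\dots x_p$, $y=y_1\dots y_{q}$ over $\mathcal{A}$ (possibly empty), an alignment $\pi$ is a sequence $((\mu_1,\nu_1),\dots,(\mu_j,\nu_j))$, $j\ge0$, with $1\le\mu_1<\dots<\mu_j\le p$ and $1\le\nu_1<\dots<\nu_j\le q$; its score is $S_\pi(x,y)=\sum_{i=1}^j S(x_{\mu_i},y_{\nu_i})+\sum_{l\notin\{\mu_i\}}S(x_l,G)+\sum_{l\notin\{\nu_i\}}S(G,y_l)$, and $L_S(x,y)=\max_\pi S_\pi(x,y)$. Let $X_1,X_2,\dots,Y_1,Y_2,\dots$ be i.i.d. letters in $\mathcal{A}$; $\lambda_n(S)=E[L_S(X_1\dots X_n,Y_1\dots Y_n)]/n$. $\mathcal{P}_{m,n}$ is the set of pairs of integer vectors $\vec r=(r_0,\dots,r_{2k})$, $\vec s=(s_0,\dots,s_{2k})$ with $0=r_0\le r_1\le\dots\le r_{2k}=m$, $0=s_0\le s_1\le\dots\le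 s_{2k}=m$ and $r_i-r_{i-1}+s_i-s_{i-1}\in\{n-1,n,n+1\}$ for $i=1,\dots,2k$. For such a pair, $L_m(S,\vec r,\vec s)=\sum_{i=1}^{2k}L_S(X_{r_{i-1}+1}\dots X_{r_i},\,Y_{s_{i-1}+1}\dots Y_{s_i})$. *)

theory Defs
  imports "HOL-Probability.Probability"
begin

text \<open>Letters of the alphabet are elements of a finite type 'a; the extended alphabet
  A* = A + {G} is 'a option, with None playing the role of the gap symbol G.
  Strings are lists, position l (1-based) of x is x ! (l - 1).\<close>

type_synonym 'a scoring = "'a option \<Rightarrow> 'a option \<Rightarrow> real"

definition scoring_function :: "'a scoring \<Rightarrow> bool" where
  "scoring_function S \<longleftrightarrow> (\<forall>c d. S c d = S d c)"

definition sup_norm :: "('a::finite) scoring \<Rightarrow> real" where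
  "sup_norm S = Max {\<bar>S c d\<bar> | c d. True}"

definition is_alignment :: "nat \<Rightarrow> nat \<Rightarrow> (nat \<times> nat) list \<Rightarrow> bool" where
  "is_alignment p q \<pi> \<longleftrightarrow>
     sorted_wrt (<) (map fst \<pi>) \<and> sorted_wrt (<) (map snd \<pi>) \<and>
     (\<forall>(\<mu>, \<nu>) \<in> set \<pi>. 1 \<le> \<mu> \<and> \<mu> \<le> p \<and> 1 \<le> \<nu> \<and> \<nu> \<le> q)"

definition align_score :: "'a scoring \<Rightarrow> 'a list \<Rightarrow> 'a list \<Rightarrow> (nat \<times> nat) list \<Rightarrow> real" where
  "align_score S x y \<pi> =
     (\<Sum>(\<mu>, \<nu>) \<leftarrow> \<pi>. S (Some (x ! (\<mu> - 1))) (Some (y ! (\<nu> - 1))))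
     + (\<Sum>l \<in> {1..length x} - fst ` set \<pi>. S (Some (x ! (l - 1))) None)
     + (\<Sum>l \<in> {1..length y} - snd ` set \<pi>. S None (Some (y ! (l - 1))))"

definition L_S :: "'a scoring \<Rightarrow> 'a list \<Rightarrow> 'a list \<Rightarrow> real" where
  "L_S S x y = Max (align_score S x y ` {\<pi>. is_alignment (length x) (length y) \<pi>})"

text \<open>The i.i.d. letters X_1, X_2, ... and Y_1, Y_2, ... with common law p: the first N
  of each are the pair of independent words drawn from replicate_pmf N p.\<close>
definition words_pmf :: "'a pmf \<Rightarrow> nat \<Rightarrow> ('a list \<times> 'a list) pmf" where
  "words_pmf p N = pair_pmf (replicate_pmf N p) (replicate_pmf N p)"

definition lambda_n :: "'a pmf \<Rightarrow> 'a scoring \<Rightarrow> nat \<Rightarrow> real" where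
  "lambda_n p S n = measure_pmf.expectation (words_pmf p n) (\<lambda>(xs, ys). L_S S xs ys) / real n"

text \<open>Substring w_{a+1} ... w_b of w (1-based).\<close>
definition seg :: "'a list \<Rightarrow> nat \<Rightarrow> nat \<Rightarrow> 'a list" where
  "seg w a b = take (b - a) (drop a w)"

text \<open>P_{m,n} with k = m div n (in the theorem m = k n): vectors r_0..r_{2k}, s_0..s_{2k}.\<close>
definition P_mn :: "nat \<Rightarrow> nat \<Rightarrow> (nat list \<times> nat list) set" where
  "P_mn m n = {(r, s). let k = m div n in
      length r = 2 * k + 1 \<and> length s = 2 * k + 1 \<and>
      r ! 0 = 0 \<and> s ! 0 = 0 \<and> r ! (2 * k) = m \<and> s ! (2 * k) = m \<and>
      (\<forall>i \<in> {1..2 * k}. r ! (i - 1) \<le> r ! i \<and> s ! (i - 1) \<le> s ! i \<and>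
         (r ! i - r ! (i - 1)) + (s ! i - s ! (i - 1)) \<in> {n - 1, n, n + 1})}"

definition L_m :: "'a scoring \<Rightarrow> nat list \<Rightarrow> nat list \<Rightarrow> 'a list \<Rightarrow> 'a list \<Rightarrow> real" where
  "L_m S r s xs ys = (\<Sum>i = 1..length r - 1.
      L_S S (seg xs (r ! (i - 1)) (r ! i)) (seg ys (s ! (i - 1)) (s ! i)))"

end

theory Submission
  imports Defs
begin

text \<open>
  Write g(a, b) for the expected optimal score of two independent i.i.d.
  random words of lengths a and b, and sigma for the sup norm of S.  Each block i of
  L_m is an alignment problem between independent i.i.d. words whose lengths a_i, b_i
  satisfy a_i + b_i in {n - 1, n, n + 1}, so E[L_m] = sum_i g(a_i, b_i).  By symmetry and
  superadditivity of g (gluing alignments), 2 g(a, b) <= g(a + b, a + b).  Deleting the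
  last letters of two words costs at most 3 sigma and g(1, 1) >= -sigma, which gives
  g(c, c) <= g(n, n) + 2 sigma + (c - n) sigma for c = n - 1, n, n + 1.  Summing over the 2k
  blocks, whose lengths add up to 2m = 2kn, yields E[L_m] <= k (g(n, n) + 2 sigma), and
  dividing by m = kn gives the claim, as lambda_n = g(n, n) / n.
\<close>

lemma alignment_box:
  assumes "is_alignment P Q \<pi>"
  shows "set \<pi> \<subseteq> {1..P} \<times> {1..Q}"
  using assms unfolding is_alignment_def by auto

text \<open>An alignment lists each pair once, so its score is a sum over a set of pairs.\<close>
lemma alignment_distinct:
  assumes "is_alignment P Q \<pi>"
  shows "distinct \<pi>"
  using assms unfolding is_alignment_def by (simp add: strict_sorted_iff distinct_map)

text \<open>There are finitely many alignments, so L_S is a maximum that is attained.\<close>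
lemma alignments_finite: "finite {\<pi>. is_alignment P Q \<pi>}"
proof -
  have "length \<pi> \<le> P" if "is_alignment P Q \<pi>" for \<pi>
  proof -
    have "distinct (map fst \<pi>)"
      using that unfolding is_alignment_def by (simp add: strict_sorted_iff)
    moreover have "set (map fst \<pi>) \<subseteq> {1..P}" using alignment_box[OF that] by auto
    ultimately show ?thesis by (metis card_atLeastAtMost card_mono diff_Suc_1 distinct_card
          finite_atLeastAtMost length_map)
  qed
  then have "{\<pi>. is_alignment P Q \<pi>} \<subseteq> {\<pi>. set \<pi> \<subseteq> {1..P} \<times> {1..Q} \<and> length \<pi> \<le> P}"
    using alignment_box by blast
  moreover have "finite {\<pi>. set \<pi> \<subseteq> {1..P} \<times> {1..Q} \<and> length \<pi> \<le> P}"
    by (rule finite_lists_length_le) auto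
  ultimately show ?thesis by (rule finite_subset)
qed

lemma L_S_ge:
  assumes "is_alignment (length x) (length y) \<pi>"
  shows "align_score S x y \<pi> \<le> L_S S x y"
  unfolding L_S_def using assms alignments_finite by (intro Max_ge) auto

lemma L_S_attained:
  obtains \<pi> where "is_alignment (length x) (length y) \<pi>" "L_S S x y = align_score S x y \<pi>"
proof -
  have "is_alignment (length x) (length y) []" by (simp add: is_alignment_def)
  then have "L_S S x y \<in> align_score S x y ` {\<pi>. is_alignment (length x) (length y) \<pi>}"
    unfolding L_S_def using alignments_finite by (intro Max_in) blast+
  then show ?thesis using that by auto
qed

text \<open>For a symmetric scoring function, mirroring an alignment shows that L_S is
  symmetric in its two words.\<close>
lemma L_S_swap_le:
  assumes "scoring_function S"
  shows "L_S S x y \<le> L_S S y x"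
proof -
  obtain \<pi> where al: "is_alignment (length x) (length y) \<pi>" and opt: "L_S S x y = align_score S x y \<pi>"
    by (rule L_S_attained)
  have sym: "S c d = S d c" for c d using assms unfolding scoring_function_def by blast
  have al_swap: "is_alignment (length y) (length x) (map prod.swap \<pi>)"
    using al unfolding is_alignment_def by (auto simp: comp_def)
  have "fst ` set (map prod.swap \<pi>) = snd ` set \<pi>" "snd ` set (map prod.swap \<pi>) = fst ` set \<pi>"
    by force+
  then have "align_score S y x (map prod.swap \<pi>) = align_score S x y \<pi>"
    unfolding align_score_def by (simp add: comp_def case_prod_unfold sym)
  then show ?thesis using L_S_ge[OF al_swap, of S] opt by simp
qed

lemma L_S_swap:
  assumes "scoring_function S"
  shows "L_S S x y = L_S S y x"
  using L_S_swap_le[OF assms, of x y] L_S_swap_le[OF assms, of y x] by simp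

text \<open>Working with sets makes cutting and gluing easy.\<close>
definition set_score :: "'a scoring \<Rightarrow> 'a list \<Rightarrow> 'a list \<Rightarrow> nat \<Rightarrow> nat \<Rightarrow> (nat \<times> nat) set \<Rightarrow> real" where
  "set_score S x y P Q T =
     (\<Sum>(\<mu>, \<nu>) \<in> T. S (Some (x ! (\<mu> - 1))) (Some (y ! (\<nu> - 1))))
     + (\<Sum>l \<in> {1..P} - fst ` T. S (Some (x ! (l - 1))) None)
     + (\<Sum>l \<in> {1..Q} - snd ` T. S None (Some (y ! (l - 1))))"

lemma align_score_set_score:
  assumes "is_alignment (length x) (length y) \<pi>"
  shows "align_score S x y \<pi> = set_score S x y (length x) (length y) (set \<pi>)"
  unfolding align_score_def set_score_def
  using alignment_distinct[OF assms] by (simp add: sum_list_distinct_conv_sum_set)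

lemma set_score_prefix:
  assumes "T \<subseteq> {1..length x} \<times> {1..length y}"
  shows "set_score S (x @ u) (y @ v) (length x) (length y) T = set_score S x y (length x) (length y) T"
  unfolding set_score_def
proof (intro arg_cong2[where f = "(+)"] sum.cong refl)
  fix t assume "t \<in> T"
  with assms obtain \<mu> \<nu> where "t = (\<mu>, \<nu>)" "1 \<le> \<mu>" "\<mu> \<le> length x" "1 \<le> \<nu>" "\<nu> \<le> length y"
    by auto
  then show "(case t of (\<mu>, \<nu>) \<Rightarrow> S (Some ((x @ u) ! (\<mu> - 1))) (Some ((y @ v) ! (\<nu> - 1))))
    = (case t of (\<mu>, \<nu>) \<Rightarrow> S (Some (x ! (\<mu> - 1))) (Some (y ! (\<nu> - 1))))"
    by (auto simp: nth_append)
qed (auto simp: nth_append)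

lemma gap_sum_split:
  fixes g :: "nat \<Rightarrow> real"
  assumes A: "A \<subseteq> {1..P}" and B: "B \<subseteq> {1..P'}"
  shows "(\<Sum>l \<in> {1..P + P'} - (A \<union> (\<lambda>l. l + P) ` B). g l)
     = (\<Sum>l \<in> {1..P} - A. g l) + (\<Sum>l \<in> {1..P'} - B. g (l + P))"
proof -
  have split: "{1..P + P'} - (A \<union> (\<lambda>l. l + P) ` B) = ({1..P} - A) \<union> (\<lambda>l. l + P) ` ({1..P'} - B)"
  proof (intro equalityI subsetI)
    fix l assume l: "l \<in> {1..P + P'} - (A \<union> (\<lambda>l. l + P) ` B)"
    show "l \<in> ({1..P} - A) \<union> (\<lambda>l. l + P) ` ({1..P'} - B)"
    proof (cases "l \<le> P")
      case False
      then have "l = (l - P) + P" "l - P \<in> {1..P'} - B" using l by (auto simp: image_iff)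
      then show ?thesis by blast
    qed (use l in auto)
  qed (use A B in auto)
  have "({1..P} - A) \<inter> (\<lambda>l. l + P) ` ({1..P'} - B) = {}" by auto
  then show ?thesis unfolding split
    by (subst sum.union_disjoint) (auto simp: sum.reindex inj_on_def)
qed

lemma set_score_append:
  fixes x y x' y' :: "'a list"
  defines "offset \<equiv> \<lambda>(\<mu>, \<nu>). (\<mu> + length x, \<nu> + length y)"
  assumes T1: "T1 \<subseteq> {1..length x} \<times> {1..length y}" and T2: "T2 \<subseteq> {1..length x'} \<times> {1..length y'}"
  shows "set_score S (x @ x') (y @ y') (length x + length x') (length y + length y') (T1 \<union> offset ` T2)
       = set_score S x y (length x) (length y) T1 + set_score S x' y' (length x') (length y') T2"
proof -
  let ?m = "\<lambda>x y (\<mu>, \<nu>). S (Some (x ! (\<mu> - 1))) (Some (y ! (\<nu> - 1)))"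
  have fin: "finite T1" "finite T2" using T1 T2 finite_subset by blast+
  have "inj_on offset T2" unfolding offset_def by (auto simp: inj_on_def)
  moreover have "T1 \<inter> offset ` T2 = {}" using T1 T2 unfolding offset_def by fastforce
  ultimately have "(\<Sum>t \<in> T1 \<union> offset ` T2. ?m (x @ x') (y @ y') t)
      = (\<Sum>t \<in> T1. ?m (x @ x') (y @ y') t) + (\<Sum>t \<in> T2. ?m (x @ x') (y @ y') (offset t))"
    using fin by (simp add: sum.union_disjoint sum.reindex)
  also have "\<dots> = (\<Sum>t \<in> T1. ?m x y t) + (\<Sum>t \<in> T2. ?m x' y' t)"
  proof (intro arg_cong2[where f = "(+)"] sum.cong refl)
    fix t assume "t \<in> T1"
    with T1 obtain \<mu> \<nu> where "t = (\<mu>, \<nu>)" "1 \<le> \<mu>" "\<mu> \<le> length x" "1 \<le> \<nu>" "\<nu> \<le> length y"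
      by auto
    then show "?m (x @ x') (y @ y') t = ?m x y t" by (auto simp: nth_append)
  next
    fix t assume "t \<in> T2"
    with T2 obtain \<mu> \<nu> where "t = (\<mu>, \<nu>)" "1 \<le> \<mu>" "1 \<le> \<nu>" by auto
    then show "?m (x @ x') (y @ y') (offset t) = ?m x' y' t" by (auto simp: nth_append offset_def)
  qed
  finally have matched: "(\<Sum>t \<in> T1 \<union> offset ` T2. ?m (x @ x') (y @ y') t)
      = (\<Sum>t \<in> T1. ?m x y t) + (\<Sum>t \<in> T2. ?m x' y' t)" .
  have images: "fst ` (T1 \<union> offset ` T2) = fst ` T1 \<union> (\<lambda>l. l + length x) ` fst ` T2"
    "snd ` (T1 \<union> offset ` T2) = snd ` T1 \<union> (\<lambda>l. l + length y) ` snd ` T2"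
    unfolding offset_def by force+
  have fst_T1: "fst ` T1 \<subseteq> {1..length x}" and fst_T2: "fst ` T2 \<subseteq> {1..length x'}"
    and snd_T1: "snd ` T1 \<subseteq> {1..length y}" and snd_T2: "snd ` T2 \<subseteq> {1..length y'}"
    using T1 T2 by force+
  have gaps_x: "(\<Sum>l \<in> {1..length x + length x'} - fst ` (T1 \<union> offset ` T2). S (Some ((x @ x') ! (l - 1))) None)
      = (\<Sum>l \<in> {1..length x} - fst ` T1. S (Some (x ! (l - 1))) None)
        + (\<Sum>l \<in> {1..length x'} - fst ` T2. S (Some (x' ! (l - 1))) None)"
    unfolding images gap_sum_split[OF fst_T1 fst_T2]
    by (intro arg_cong2[where f = "(+)"] sum.cong) (auto simp: nth_append)
  have gaps_y: "(\<Sum>l \<in> {1..length y + length y'} - snd ` (T1 \<union> offset ` T2). S None (Some ((y @ y') ! (l - 1))))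
      = (\<Sum>l \<in> {1..length y} - snd ` T1. S None (Some (y ! (l - 1))))
        + (\<Sum>l \<in> {1..length y'} - snd ` T2. S None (Some (y' ! (l - 1))))"
    unfolding images gap_sum_split[OF snd_T1 snd_T2]
    by (intro arg_cong2[where f = "(+)"] sum.cong) (auto simp: nth_append)
  show ?thesis unfolding set_score_def matched gaps_x gaps_y by simp
qed

lemma alignment_append:
  assumes "is_alignment P Q \<pi>" "is_alignment P' Q' \<pi>'"
  shows "is_alignment (P + P') (Q + Q') (\<pi> @ map (\<lambda>(\<mu>, \<nu>). (\<mu> + P, \<nu> + Q)) \<pi>')"
  using assms alignment_box[OF assms(1)] alignment_box[OF assms(2)]
  unfolding is_alignment_def
  by (fastforce simp: sorted_wrt_append sorted_wrt_map case_prod_beta)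

text \<open>Concatenating optimal alignments of two pairs of words gives an alignment of the
  concatenated pairs, so L_S is superadditive under concatenation.\<close>
lemma L_S_append:
  "L_S S x y + L_S S x' y' \<le> L_S S (x @ x') (y @ y')"
proof -
  obtain \<pi> where al: "is_alignment (length x) (length y) \<pi>" and opt: "L_S S x y = align_score S x y \<pi>"
    by (rule L_S_attained)
  obtain \<pi>' where al': "is_alignment (length x') (length y') \<pi>'"
    and opt': "L_S S x' y' = align_score S x' y' \<pi>'"
    by (rule L_S_attained)
  define offset where "offset = (\<lambda>(\<mu>, \<nu>). (\<mu> + length x, \<nu> + length y))"
  have al_cat: "is_alignment (length (x @ x')) (length (y @ y')) (\<pi> @ map offset \<pi>')"
    using alignment_append[OF al al'] unfolding offset_def by simp
  have "L_S S x y + L_S S x' y' = align_score S (x @ x') (y @ y') (\<pi> @ map offset \<pi>')"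
    unfolding opt opt' align_score_set_score[OF al] align_score_set_score[OF al']
      align_score_set_score[OF al_cat]
    using set_score_append[OF alignment_box[OF al] alignment_box[OF al'], of S]
    by (simp add: offset_def)
  also have "\<dots> \<le> L_S S (x @ x') (y @ y')" by (rule L_S_ge[OF al_cat])
  finally show ?thesis .
qed

lemma alignment_last_cases:
  assumes "is_alignment (Suc P) (Suc Q) \<pi>"
  obtains (inside) "is_alignment P Q \<pi>"
  | (corner) \<pi>' t where "\<pi> = \<pi>' @ [t]" "is_alignment P Q \<pi>'" "fst t = Suc P \<or> snd t = Suc Q"
      "fst t \<in> {1..Suc P}" "snd t \<in> {1..Suc Q}" "fst t \<notin> fst ` set \<pi>'" "snd t \<notin> snd ` set \<pi>'"
proof (cases \<pi> rule: rev_exhaust)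
  case Nil
  then show ?thesis using inside by (simp add: is_alignment_def)
next
  case (snoc \<pi>' t)
  have before: "\<forall>u \<in> set \<pi>'. fst u < fst t \<and> snd u < snd t"
    and box: "fst t \<in> {1..Suc P}" "snd t \<in> {1..Suc Q}"
    using assms unfolding snoc is_alignment_def by (auto simp: sorted_wrt_append)
  have al': "is_alignment P Q \<pi>'"
    using assms before box unfolding snoc is_alignment_def by (fastforce simp: sorted_wrt_append)
  show ?thesis
  proof (cases "fst t = Suc P \<or> snd t = Suc Q")
    case True
    have "fst t \<notin> fst ` set \<pi>'" "snd t \<notin> snd ` set \<pi>'" using before by force+
    with True show ?thesis using corner[OF snoc al'] box by blast
  next
    case False
    then have "is_alignment P Q \<pi>"
      using assms before box unfolding snoc is_alignment_def by (fastforce simp: sorted_wrt_append)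
    then show ?thesis by (rule inside)
  qed
qed

lemma gap_sum_extend:
  fixes g :: "nat \<Rightarrow> real"
  assumes "A \<subseteq> {1..P}"
  shows "(\<Sum>l \<in> {1..Suc P} - A. g l) = (\<Sum>l \<in> {1..P} - A. g l) + g (Suc P)"
proof -
  have "{1..Suc P} - A = insert (Suc P) ({1..P} - A)" using assms by auto
  then show ?thesis by simp
qed

text \<open>Effect on the gap sum of one extra position when position j becomes matched:
  nothing if j is the new position, otherwise j's gap term is traded for the new one.\<close>
lemma gap_sum_insert:
  fixes g :: "nat \<Rightarrow> real"
  assumes A: "A \<subseteq> {1..P}" and j: "j \<in> {1..Suc P}" "j \<notin> A" and bound: "\<And>l. \<bar>g l\<bar> \<le> \<sigma>"
  shows "(\<Sum>l \<in> {1..Suc P} - insert j A. g l) \<le> (\<Sum>l \<in> {1..P} - A. g l) + (if j = Suc P then 0 else 2 * \<sigma>)"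
proof (cases "j = Suc P")
  case True
  then have "{1..Suc P} - insert j A = {1..P} - A" using A by auto
  with True show ?thesis by simp
next
  case False
  then have "{1..Suc P} - insert j A = insert (Suc P) (({1..P} - A) - {j})" using A j by auto
  moreover have "j \<in> {1..P} - A" using False j by auto
  ultimately have "(\<Sum>l \<in> {1..Suc P} - insert j A. g l) = (\<Sum>l \<in> {1..P} - A. g l) - g j + g (Suc P)"
    by (simp add: sum_diff1)
  with False show ?thesis using bound[of j] bound[of "Suc P"] by auto
qed

lemma set_score_extend:
  assumes "T \<subseteq> {1..P} \<times> {1..Q}"
  shows "set_score S x y (Suc P) (Suc Q) T
       = set_score S x y P Q T + S (Some (x ! P)) None + S None (Some (y ! Q))"
proof -
  have images: "fst ` T \<subseteq> {1..P}" "snd ` T \<subseteq> {1..Q}" using assms by force+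
  show ?thesis unfolding set_score_def gap_sum_extend[OF images(1)] gap_sum_extend[OF images(2)]
    by simp
qed

text \<open>One extra letter in each word and one extra pair using one of them: the new pair
  and the two changed gap sums cost at most 3 sigma, since one gap sum is unchanged.\<close>
lemma set_score_insert_corner:
  assumes T: "T \<subseteq> {1..P} \<times> {1..Q}"
    and t: "fst t \<in> {1..Suc P}" "snd t \<in> {1..Suc Q}" "fst t \<notin> fst ` T" "snd t \<notin> snd ` T"
    and corner: "fst t = Suc P \<or> snd t = Suc Q"
    and bound: "\<And>c d. \<bar>S c d\<bar> \<le> \<sigma>"
  shows "set_score S x y (Suc P) (Suc Q) (insert t T) \<le> set_score S x y P Q T + 3 * \<sigma>"
proof -
  have images: "fst ` T \<subseteq> {1..P}" "snd ` T \<subseteq> {1..Q}" using T by force+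
  have "finite T" "t \<notin> T" using T t finite_subset by (blast, force)
  then have matched: "(\<Sum>(\<mu>, \<nu>) \<in> insert t T. S (Some (x ! (\<mu> - 1))) (Some (y ! (\<nu> - 1))))
      \<le> (\<Sum>(\<mu>, \<nu>) \<in> T. S (Some (x ! (\<mu> - 1))) (Some (y ! (\<nu> - 1)))) + \<sigma>"
    using bound by (simp add: case_prod_beta abs_le_iff)
  have gaps_x: "(\<Sum>l \<in> {1..Suc P} - fst ` insert t T. S (Some (x ! (l - 1))) None)
      \<le> (\<Sum>l \<in> {1..P} - fst ` T. S (Some (x ! (l - 1))) None) + (if fst t = Suc P then 0 else 2 * \<sigma>)"
    using gap_sum_insert[OF images(1) t(1,3) bound] by simp
  have gaps_y: "(\<Sum>l \<in> {1..Suc Q} - snd ` insert t T. S None (Some (y ! (l - 1))))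
      \<le> (\<Sum>l \<in> {1..Q} - snd ` T. S None (Some (y ! (l - 1)))) + (if snd t = Suc Q then 0 else 2 * \<sigma>)"
    using gap_sum_insert[OF images(2) t(2,4) bound] by simp
  have "0 \<le> \<sigma>" using bound[of None None] by linarith
  with corner show ?thesis
    using matched gaps_x gaps_y unfolding set_score_def by (auto split: if_splits)
qed

text \<open>Appending one letter to each word raises the optimal score by at most 3 sigma,
  where sigma bounds all scores: drop the pairs of an optimal alignment that use a new letter.\<close>
lemma L_S_snoc:
  assumes bound: "\<And>c d. \<bar>S c d\<bar> \<le> \<sigma>"
  shows "L_S S (x @ [a]) (y @ [b]) \<le> L_S S x y + 3 * \<sigma>"
proof -
  obtain \<pi> where al_snoc: "is_alignment (length (x @ [a])) (length (y @ [b])) \<pi>"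
    and opt_snoc: "L_S S (x @ [a]) (y @ [b]) = align_score S (x @ [a]) (y @ [b]) \<pi>"
    by (rule L_S_attained)
  have al: "is_alignment (Suc (length x)) (Suc (length y)) \<pi>" using al_snoc by simp
  have opt: "L_S S (x @ [a]) (y @ [b])
      = set_score S (x @ [a]) (y @ [b]) (Suc (length x)) (Suc (length y)) (set \<pi>)"
    using opt_snoc align_score_set_score[OF al_snoc] by simp
  have "0 \<le> \<sigma>" using bound[of None None] by linarith
  from al show ?thesis
  proof (cases rule: alignment_last_cases)
    case inside
    note box = alignment_box[OF inside]
    have "L_S S (x @ [a]) (y @ [b])
        = set_score S x y (length x) (length y) (set \<pi>) + S (Some a) None + S None (Some b)"
      unfolding opt set_score_extend[OF box] set_score_prefix[OF box] by simp
    also have "\<dots> \<le> L_S S x y + \<sigma> + \<sigma>"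
      using L_S_ge[OF inside, of S] align_score_set_score[OF inside, of S]
        bound[of "Some a" None] bound[of None "Some b"] by auto
    finally show ?thesis using \<open>0 \<le> \<sigma>\<close> by linarith
  next
    case (corner \<pi>' t)
    note box = alignment_box[OF corner(2)]
    have "L_S S (x @ [a]) (y @ [b])
        \<le> set_score S (x @ [a]) (y @ [b]) (length x) (length y) (set \<pi>') + 3 * \<sigma>"
      unfolding opt using corner by (auto intro: set_score_insert_corner[OF box _ _ _ _ _ bound])
    also have "\<dots> \<le> L_S S x y + 3 * \<sigma>"
      using L_S_ge[OF corner(2), of S] align_score_set_score[OF corner(2), of S]
        set_score_prefix[OF box] by simp
    finally show ?thesis .
  qed
qed

definition word_pair_pmf :: "'a pmf \<Rightarrow> nat \<Rightarrow> nat \<Rightarrow> ('a list \<times> 'a list) pmf" where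
  "word_pair_pmf p a b = pair_pmf (replicate_pmf a p) (replicate_pmf b p)"

definition expected_score :: "'a pmf \<Rightarrow> 'a scoring \<Rightarrow> nat \<Rightarrow> nat \<Rightarrow> real" where
  "expected_score p S a b = measure_pmf.expectation (word_pair_pmf p a b) (\<lambda>(x, y). L_S S x y)"

text \<open>Over a finite alphabet all random words have finite support, so every
  expectation below is a finite sum and integrability is automatic.\<close>
lemma finite_set_word_pair_pmf: "finite (set_pmf (word_pair_pmf (p :: 'a::finite pmf) a b))"
proof -
  have "finite (set_pmf (replicate_pmf n p))" for n
    using finite_lists_length_eq[of "UNIV :: 'a set" n] by (simp add: set_replicate_pmf)
  then show ?thesis unfolding word_pair_pmf_def by simp
qed

lemma integrable_word_pairs:
  fixes p :: "'a::finite pmf" and f :: "('a list \<times> 'a list) \<times> ('a list \<times> 'a list) \<Rightarrow> real"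
  shows "integrable (measure_pmf (pair_pmf (word_pair_pmf p a b) (word_pair_pmf p a' b'))) f"
  by (rule integrable_measure_pmf_finite) (simp add: finite_set_word_pair_pmf)

lemma replicate_pmf_add:
  "replicate_pmf (a + b) p = map_pmf (\<lambda>(u, v). u @ v) (pair_pmf (replicate_pmf a p) (replicate_pmf b p))"
  unfolding replicate_pmf_distrib pair_pmf_def map_pmf_def by (simp add: bind_assoc_pmf bind_return_pmf)

lemma pair_pmf_interchange:
  "pair_pmf (pair_pmf A B) (pair_pmf C D) =
   map_pmf (\<lambda>((a, c), (b, d)). ((a, b), (c, d))) (pair_pmf (pair_pmf A C) (pair_pmf B D))"
  unfolding pair_pmf_def map_pmf_def
  by (simp add: bind_assoc_pmf bind_return_pmf, subst bind_commute_pmf, simp)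

lemma word_pair_pmf_append:
  "word_pair_pmf p (a + a') (b + b') =
   map_pmf (\<lambda>((x, y), (x', y')). (x @ x', y @ y')) (pair_pmf (word_pair_pmf p a b) (word_pair_pmf p a' b'))"
proof -
  have "word_pair_pmf p (a + a') (b + b') = map_pmf (\<lambda>(u, v). ((\<lambda>(u, v). u @ v) u, (\<lambda>(u, v). u @ v) v))
      (pair_pmf (pair_pmf (replicate_pmf a p) (replicate_pmf a' p))
        (pair_pmf (replicate_pmf b p) (replicate_pmf b' p)))"
    unfolding word_pair_pmf_def replicate_pmf_add map_pair ..
  also have "\<dots> = map_pmf (\<lambda>((x, y), (x', y')). (x @ x', y @ y'))
      (pair_pmf (word_pair_pmf p a b) (word_pair_pmf p a' b'))"
    unfolding word_pair_pmf_def
    by (subst pair_pmf_interchange) (simp add: map_pmf_comp case_prod_unfold)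
  finally show ?thesis .
qed

lemma expected_score_append:
  "expected_score p S (a + a') (b + b') =
   measure_pmf.expectation (pair_pmf (word_pair_pmf p a b) (word_pair_pmf p a' b'))
     (\<lambda>((x, y), (x', y')). L_S S (x @ x') (y @ y'))"
  unfolding expected_score_def word_pair_pmf_append by (simp add: case_prod_unfold)

lemma map_seg_replicate_pmf:
  assumes "u \<le> v" "v \<le> m"
  shows "map_pmf (\<lambda>xs. seg xs u v) (replicate_pmf m p) = replicate_pmf (v - u) p"
proof -
  have m: "m = u + ((v - u) + (m - v))" using assms by simp
  let ?M = "pair_pmf (replicate_pmf u p) (pair_pmf (replicate_pmf (v - u) p) (replicate_pmf (m - v) p))"
  have "map_pmf (\<lambda>xs. seg xs u v) (replicate_pmf m p) =
      map_pmf (\<lambda>(a, b, c). seg (a @ b @ c) u v) ?M"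
    by (subst m, simp only: replicate_pmf_add pair_map_pmf2 map_pmf_comp)
      (simp add: case_prod_unfold)
  also have "\<dots> = map_pmf (\<lambda>z. fst (snd z)) ?M"
  proof (intro map_pmf_cong refl)
    fix z assume "z \<in> set_pmf ?M"
    then show "(\<lambda>(a, b, c). seg (a @ b @ c) u v) z = fst (snd z)"
      by (auto simp: seg_def set_replicate_pmf)
  qed
  also have "\<dots> = replicate_pmf (v - u) p"
    by (simp add: map_pmf_comp[symmetric] map_snd_pair_pmf map_fst_pair_pmf)
  finally show ?thesis .
qed

lemma expected_score_swap:
  assumes "scoring_function S"
  shows "expected_score p S a b = expected_score p S b a"
proof -
  have "word_pair_pmf p a b = map_pmf (\<lambda>(x, y). (y, x)) (word_pair_pmf p b a)"
    unfolding word_pair_pmf_def by (rule pair_commute_pmf)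
  then show ?thesis unfolding expected_score_def using L_S_swap[OF assms] by (simp add: case_prod_unfold)
qed

lemma expected_score_superadditive:
  fixes p :: "'a::finite pmf"
  shows "expected_score p S a b + expected_score p S a' b' \<le> expected_score p S (a + a') (b + b')"
proof -
  let ?M = "pair_pmf (word_pair_pmf p a b) (word_pair_pmf p a' b')"
  let ?L = "\<lambda>w. L_S S (fst w) (snd w)"
  have "expected_score p S a b = measure_pmf.expectation ?M (\<lambda>z. ?L (fst z))"
    "expected_score p S a' b' = measure_pmf.expectation ?M (\<lambda>z. ?L (snd z))"
    unfolding expected_score_def case_prod_unfold
    by (rule expectation_pair_pmf_fst[symmetric], rule expectation_pair_pmf_snd[symmetric])
  then have "expected_score p S a b + expected_score p S a' b'
      = measure_pmf.expectation ?M (\<lambda>z. ?L (fst z)) + measure_pmf.expectation ?M (\<lambda>z. ?L (snd z))"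
    by simp
  also have "\<dots> = measure_pmf.expectation ?M (\<lambda>z. ?L (fst z) + ?L (snd z))"
    by (rule Bochner_Integration.integral_add[symmetric]; rule integrable_word_pairs)
  also have "\<dots> \<le> measure_pmf.expectation ?M
      (\<lambda>z. L_S S (fst (fst z) @ fst (snd z)) (snd (fst z) @ snd (snd z)))"
    by (intro integral_mono integrable_word_pairs) (rule L_S_append)
  also have "\<dots> = expected_score p S (a + a') (b + b')"
    by (simp add: expected_score_append case_prod_unfold)
  finally show ?thesis .
qed

lemma expected_score_snoc:
  fixes p :: "'a::finite pmf"
  assumes bound: "\<And>c d. \<bar>S c d\<bar> \<le> \<sigma>"
  shows "expected_score p S (a + 1) (b + 1) \<le> expected_score p S a b + 3 * \<sigma>"
proof -
  let ?M = "pair_pmf (word_pair_pmf p a b) (word_pair_pmf p 1 1)"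
  have "expected_score p S (a + 1) (b + 1)
      \<le> measure_pmf.expectation ?M (\<lambda>((x, y), _). L_S S x y + 3 * \<sigma>)"
    unfolding expected_score_append
  proof (intro integral_mono_AE integrable_word_pairs AE_pmfI)
    fix z assume "z \<in> set_pmf ?M"
    then obtain x y c d where "z = ((x, y), ([c], [d]))"
      by (auto simp: word_pair_pmf_def set_replicate_pmf length_Suc_conv)
    then show "(\<lambda>((x, y), (x', y')). L_S S (x @ x') (y @ y')) z \<le> (\<lambda>((x, y), _). L_S S x y + 3 * \<sigma>) z"
      using L_S_snoc[OF bound] by simp
  qed
  also have "\<dots> = measure_pmf.expectation ?M (\<lambda>((x, y), _). L_S S x y)
      + measure_pmf.expectation ?M (\<lambda>_. 3 * \<sigma>)"
    unfolding case_prod_unfold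
    by (rule Bochner_Integration.integral_add; rule integrable_word_pairs)
  also have "\<dots> = expected_score p S a b + 3 * \<sigma>"
    unfolding expected_score_def case_prod_unfold
    using expectation_pair_pmf_fst[of "word_pair_pmf p a b" "word_pair_pmf p 1 1" "\<lambda>w. L_S S (fst w) (snd w)"]
    by simp
  finally show ?thesis .
qed

text \<open>Two single letters can always be matched, so g(1, 1) is at least the lowest score.\<close>
lemma expected_score_one_one:
  fixes p :: "'a::finite pmf"
  assumes bound: "\<And>c d. \<bar>S c d\<bar> \<le> \<sigma>"
  shows "- \<sigma> \<le> expected_score p S 1 1"
proof -
  have "- \<sigma> \<le> L_S S x y" if "(x, y) \<in> set_pmf (word_pair_pmf p 1 1)" for x y
  proof -
    have "length x = 1" "length y = 1" using that by (auto simp: word_pair_pmf_def set_replicate_pmf)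
    then obtain c d where cd: "x = [c]" "y = [d]" by (cases x; cases y) auto
    have "is_alignment (length x) (length y) [(1, 1)]" unfolding cd by (simp add: is_alignment_def)
    then have "align_score S x y [(1, 1)] \<le> L_S S x y" by (rule L_S_ge)
    then show ?thesis using bound[of "Some c" "Some d"] by (simp add: cd align_score_def)
  qed
  then have "measure_pmf.expectation (word_pair_pmf p 1 1) (\<lambda>_. - \<sigma>) \<le> expected_score p S 1 1"
    unfolding expected_score_def
    by (intro integral_mono_AE AE_pmfI integrable_measure_pmf_finite finite_set_word_pair_pmf) auto
  then show ?thesis by simp
qed

lemma expected_score_diagonal_step:
  fixes p :: "'a::finite pmf"
  assumes bound: "\<And>c d. \<bar>S c d\<bar> \<le> \<sigma>" and n: "n \<ge> 1" and c: "c \<in> {n - 1, n, n + 1}"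
  shows "expected_score p S c c \<le> expected_score p S n n + 2 * \<sigma> + (real c - real n) * \<sigma>"
proof -
  have "0 \<le> \<sigma>" using bound[of None None] by linarith
  from c consider "c = n - 1" | "c = n" | "c = n + 1" by auto
  then show ?thesis
  proof cases
    case 1
    have "expected_score p S (n - 1) (n - 1) + expected_score p S 1 1 \<le> expected_score p S n n"
      using expected_score_superadditive[of p S "n - 1" "n - 1" 1 1] n by simp
    moreover have "- \<sigma> \<le> expected_score p S 1 1" by (rule expected_score_one_one[OF bound])
    ultimately show ?thesis using 1 n by (simp add: of_nat_diff)
  next
    case 2
    with \<open>0 \<le> \<sigma>\<close> show ?thesis by simp
  next
    case 3
    have "expected_score p S (n + 1) (n + 1) \<le> expected_score p S n n + 3 * \<sigma>"
      by (rule expected_score_snoc[OF bound])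
    with 3 show ?thesis by simp
  qed
qed

text \<open>The key estimate for a single block: a block with a + b within one of n has
  2 g(a, b) = g(a, b) + g(b, a) <= g(a + b, a + b), which is compared with g(n, n).\<close>
lemma expected_score_block_bound:
  fixes p :: "'a::finite pmf"
  assumes sym: "scoring_function S" and bound: "\<And>c d. \<bar>S c d\<bar> \<le> \<sigma>"
    and n: "n \<ge> 1" and len: "a + b \<in> {n - 1, n, n + 1}"
  shows "expected_score p S a b
       \<le> (expected_score p S n n + 2 * \<sigma> + (real (a + b) - real n) * \<sigma>) / 2"
proof -
  have "2 * expected_score p S a b = expected_score p S a b + expected_score p S b a"
    using expected_score_swap[OF sym] by simp
  also have "\<dots> \<le> expected_score p S (a + b) (a + b)"
    using expected_score_superadditive[of p S a b b a] by (simp add: add.commute)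
  also have "\<dots> \<le> expected_score p S n n + 2 * \<sigma> + (real (a + b) - real n) * \<sigma>"
    by (rule expected_score_diagonal_step[OF bound n len])
  finally show ?thesis by simp
qed

lemma expectation_segment_pair:
  assumes "u \<le> v" "v \<le> m" "u' \<le> v'" "v' \<le> m"
  shows "measure_pmf.expectation (words_pmf p m) (\<lambda>(xs, ys). L_S S (seg xs u v) (seg ys u' v'))
       = expected_score p S (v - u) (v' - u')"
proof -
  let ?segs = "\<lambda>(xs, ys). (seg xs u v, seg ys u' v')"
  have "map_pmf ?segs (words_pmf p m) = word_pair_pmf p (v - u) (v' - u')"
    unfolding words_pmf_def word_pair_pmf_def map_pair
    using map_seg_replicate_pmf assms by metis
  then have "expected_score p S (v - u) (v' - u')
      = measure_pmf.expectation (map_pmf ?segs (words_pmf p m)) (\<lambda>(x, y). L_S S x y)"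
    unfolding expected_score_def by simp
  then show ?thesis by (simp add: case_prod_unfold)
qed

lemma chain_le_last:
  fixes f :: "nat \<Rightarrow> nat"
  assumes increments: "\<And>i. i \<in> {1..N} \<Longrightarrow> f (i - 1) \<le> f i" and "i \<le> N"
  shows "f i \<le> f N"
  using \<open>i \<le> N\<close>
proof (induction rule: dec_induct)
  case (step j)
  then show ?case using increments[of "Suc j"] by simp
qed simp

lemma expectation_L_m:
  fixes p :: "'a::finite pmf"
  assumes len: "length r = N + 1"
    and steps: "\<And>i. i \<in> {1..N} \<Longrightarrow> r ! (i - 1) \<le> r ! i \<and> s ! (i - 1) \<le> s ! i"
    and ends: "r ! N \<le> m" "s ! N \<le> m"
  shows "measure_pmf.expectation (words_pmf p m) (\<lambda>(xs, ys). L_m S r s xs ys)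
       = (\<Sum>i = 1..N. expected_score p S (r ! i - r ! (i - 1)) (s ! i - s ! (i - 1)))"
proof -
  have fin: "finite (set_pmf (words_pmf p m))"
    using finite_set_word_pair_pmf[of p m m] unfolding word_pair_pmf_def words_pmf_def .
  have "measure_pmf.expectation (words_pmf p m) (\<lambda>(xs, ys). L_m S r s xs ys)
      = (\<Sum>i = 1..N. measure_pmf.expectation (words_pmf p m)
          (\<lambda>(xs, ys). L_S S (seg xs (r ! (i - 1)) (r ! i)) (seg ys (s ! (i - 1)) (s ! i))))"
    unfolding L_m_def len case_prod_unfold
    by (simp add: Bochner_Integration.integral_sum integrable_measure_pmf_finite[OF fin])
  also have "\<dots> = (\<Sum>i = 1..N. expected_score p S (r ! i - r ! (i - 1)) (s ! i - s ! (i - 1)))"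
  proof (intro sum.cong refl expectation_segment_pair)
    fix i assume i: "i \<in> {1..N}"
    show "r ! (i - 1) \<le> r ! i" "s ! (i - 1) \<le> s ! i" using steps[OF i] by auto
    have "r ! i \<le> r ! N" "s ! i \<le> s ! N"
      using chain_le_last[where f = "\<lambda>i. r ! i", of N i] chain_le_last[where f = "\<lambda>i. s ! i", of N i]
        steps i by auto
    then show "r ! i \<le> m" "s ! i \<le> m" using ends by auto
  qed
  finally show ?thesis .
qed

lemma sum_increments:
  fixes f :: "nat \<Rightarrow> nat"
  assumes "\<And>i. i \<in> {1..N} \<Longrightarrow> f (i - 1) \<le> f i"
  shows "(\<Sum>i = 1..N. real (f i - f (i - 1))) = real (f N) - real (f 0)"
  using sum_telescope''[of 0 N "\<lambda>i. real (f i)"] assms by (simp add: of_nat_diff)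

lemma sum_half_affine:
  fixes c :: "nat \<Rightarrow> real"
  assumes "(\<Sum>i \<in> I. c i) = real (card I) * x"
  shows "(\<Sum>i \<in> I. (G + (c i - x) * \<sigma>) / 2) = real (card I) * G / 2"
proof -
  have "(\<Sum>i \<in> I. (G + (c i - x) * \<sigma>) / 2) = (\<Sum>i \<in> I. G / 2 + \<sigma> / 2 * c i - \<sigma> / 2 * x)"
    by (simp add: algebra_simps add_divide_distrib diff_divide_distrib)
  also have "\<dots> = real (card I) * G / 2 + \<sigma> / 2 * (\<Sum>i \<in> I. c i) - real (card I) * (\<sigma> / 2 * x)"
    by (simp add: sum.distrib sum_subtractf sum_distrib_left)
  finally have "(\<Sum>i \<in> I. (G + (c i - x) * \<sigma>) / 2)
      = real (card I) * G / 2 + \<sigma> / 2 * ((\<Sum>i \<in> I. c i) - real (card I) * x)"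
    by (simp add: algebra_simps)
  then show ?thesis using assms by simp
qed

lemma sup_norm_bound:
  fixes S :: "('a::finite) scoring"
  shows "\<bar>S c d\<bar> \<le> sup_norm S"
proof -
  have "{\<bar>S c d\<bar> | c d. True} = (\<lambda>(c, d). \<bar>S c d\<bar>) ` UNIV" by auto
  then show ?thesis unfolding sup_norm_def by (intro Max_ge) auto
qed

lemma lambda_n_expected_score: "lambda_n p S n = expected_score p S n n / real n"
  unfolding lambda_n_def expected_score_def words_pmf_def word_pair_pmf_def ..

theorem mainTheorem10:
  fixes S :: "('a::finite) scoring" and p :: "'a pmf" and k n m :: nat
    and r s :: "nat list"
  assumes "scoring_function S"
    and "k \<ge> 1" and "n \<ge> 1" and "m = k * n"
    and "(r, s) \<in> P_mn m n"
  shows "measure_pmf.expectation (words_pmf p m) (\<lambda>(xs, ys). L_m S r s xs ys) / real m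
           \<le> lambda_n p S n + 2 * sup_norm S / real n"
proof -
  define \<sigma> where "\<sigma> = sup_norm S"
  define G where "G = expected_score p S n n + 2 * \<sigma>"
  define a where "a i = r ! i - r ! (i - 1)" for i
  define b where "b i = s ! i - s ! (i - 1)" for i
  have bound: "\<And>c d. \<bar>S c d\<bar> \<le> \<sigma>" unfolding \<sigma>_def by (rule sup_norm_bound)
  have "m div n = k" using assms(3,4) by simp
  with assms(5) have "length r = 2 * k + 1 \<and> length s = 2 * k + 1 \<and>
      r ! 0 = 0 \<and> s ! 0 = 0 \<and> r ! (2 * k) = m \<and> s ! (2 * k) = m \<and>
      (\<forall>i \<in> {1..2 * k}. r ! (i - 1) \<le> r ! i \<and> s ! (i - 1) \<le> s ! i \<and> a i + b i \<in> {n - 1, n, n + 1})"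
    unfolding P_mn_def Let_def a_def b_def by (simp only: mem_Collect_eq prod.case; blast)
  then have shape: "length r = 2 * k + 1" "r ! 0 = 0" "s ! 0 = 0" "r ! (2 * k) = m" "s ! (2 * k) = m"
    and steps: "\<And>i. i \<in> {1..2 * k} \<Longrightarrow> r ! (i - 1) \<le> r ! i \<and> s ! (i - 1) \<le> s ! i"
    and block_lengths: "\<And>i. i \<in> {1..2 * k} \<Longrightarrow> a i + b i \<in> {n - 1, n, n + 1}"
    by auto
  have "(\<Sum>i \<in> {1..2 * k}. real (a i)) = real (r ! (2 * k)) - real (r ! 0)"
    unfolding a_def by (rule sum_increments) (use steps in blast)
  moreover have "(\<Sum>i \<in> {1..2 * k}. real (b i)) = real (s ! (2 * k)) - real (s ! 0)"
    unfolding b_def by (rule sum_increments) (use steps in blast)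
  ultimately have total_length: "(\<Sum>i \<in> {1..2 * k}. real (a i + b i)) = real (card {1..2 * k}) * real n"
    using shape assms(4) by (simp add: sum.distrib)
  have "measure_pmf.expectation (words_pmf p m) (\<lambda>(xs, ys). L_m S r s xs ys)
      = (\<Sum>i = 1..2 * k. expected_score p S (a i) (b i))"
    unfolding a_def b_def by (rule expectation_L_m) (use shape steps in auto)
  also have "\<dots> \<le> (\<Sum>i = 1..2 * k. (G + (real (a i + b i) - real n) * \<sigma>) / 2)"
    unfolding G_def using expected_score_block_bound[OF assms(1) bound assms(3)] block_lengths
    by (intro sum_mono) (simp add: add.assoc)
  also have "\<dots> = real k * G" using sum_half_affine[OF total_length] by simp
  finally have "measure_pmf.expectation (words_pmf p m) (\<lambda>(xs, ys). L_m S r s xs ys) / real m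
      \<le> real k * G / real m"
    by (simp add: divide_right_mono)
  also have "\<dots> = G / real n" using assms(2,4) by simp
  also have "\<dots> = lambda_n p S n + 2 * sup_norm S / real n"
    unfolding lambda_n_expected_score G_def \<sigma>_def by (simp add: add_divide_distrib)
  finally show ?thesis .
qed

end
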